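(* Let $T$ be the theory of the Rado graph in $\mathcal{L}=\{R\}$, $\mathcal{U}$ a monster model of $T$ and $M\prec\mathcal{U}$ a countable elementary substructure, and let $W$ be a Borel graphon. Then the function $\mu_W$ defined below is an $M$-invariant Keisler measure on $\mathcal{L}_x(\mathcal{U})$; moreover, $\mu_W$ does not concentrate on points (i.e. $\mu_W(x=a)=0$ for all $a\in\mathcal{U}$).
   Context: A graphon is a measurable symmetric $W\colon[0,1]^2\to[0,1]$; Borel if Borel measurable. $\mathfrak{m}$ is Lebesgue measure on $[0,1]$. $S^{*}_x(M)$ is the set of types in $S_x(M)$ not realized in $M$. $\lambda$ is the Keisler measure on $\mathcal{L}_x(\mathcal{U})$ with $\lambda(\bigwedge_{i\le n}R(x,a_i)\wedge\bigwedge_{j\le m}\neg R(x,b_j))=2^{-(n+m)}$ for distinct $a_i,b_j\in\mathcal{U}$; its restriction to $M$ is regarded as a Borel probability measure on $S^{*}_x(M)$. Fix an isomorphism of measure spaces $F\colon(S^{*}_x(M),\lambda)\to([0,1],\mathfrak{m})$ and write $W(p,q)=W(F(p),F(q))$ for $p,q\in S^{*}_x(M)$. A basic formula is $\varphi(x)=\bigwedge_{a\in A}R(x,a)\wedge\bigwedge_{b\in B}\neg R(x,b)\wedge\bigwedge_{c\in C}R(x,c)\wedge\bigwedge_{d\in D}\neg R(x,d)\wedge E(x)$ with $A,B\subseteq M$ finite disjoint, $C,D\subseteq\mathcal{U}\setminus M$ finite disjoint, and $E(x)$ a formula in the language of equality with parameters from $\mathcal{U}$; it is trivial if $E(x)$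 implies $x$ lies in a finite subset of $\mathcal{U}$. Define $\mu_W(\varphi)=0$ if $\varphi$ is trivial and otherwise $\mu_W(\varphi)=\int_{p\in S^{*}_x(M)}\mathbf{1}_{\psi_A\wedge\psi_B}(p)\prod_{c\in C}W(p,\operatorname{tp}(c/M))\prod_{d\in D}(1-W(p,\operatorname{tp}(d/M)))\,d\lambda$, where $\psi_A=\bigwedge_{a\in A}R(x,a)$, $\psi_B=\bigwedge_{b\in B}\neg R(x,b)$; $\mu_W$ is extended to arbitrary formulas by writing them (via quantifier elimination) as finite disjoint unions of basic formulas and adding. A Keisler measure on $\mathcal{L}_x(\mathcal{U})$ is a finitely additive probability measure on formulas modulo equivalence; it is $M$-invariant if $\mu(\varphi(x,\bar a))=\mu(\varphi(x,\bar b))$ for all $\mathcal{L}$-formulas $\varphi$ and $\bar a\equiv_M\bar b$. *)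

theory Defs
  imports "HOL-Probability.Probability"
begin

section \<open>First-order syntax for the language {R} with parameters (de Bruijn variables)\<close>

datatype 'u trm = Var nat | Par 'u

datatype 'u fm =
    FFalse
  | Rel "'u trm" "'u trm"
  | Eq "'u trm" "'u trm"
  | Neg "'u fm"
  | Conj "'u fm" "'u fm"
  | Ex "'u fm"

definition TT :: "'u fm" where "TT = Neg FFalse"
definition Disj :: "'u fm \<Rightarrow> 'u fm \<Rightarrow> 'u fm" where
  "Disj \<phi> \<psi> = Neg (Conj (Neg \<phi>) (Neg \<psi>))"

fun tval :: "(nat \<Rightarrow> 'u) \<Rightarrow> 'u trm \<Rightarrow> 'u" where
  "tval e (Var i) = e i"
| "tval e (Par a) = a"

fun sat :: "'u set \<Rightarrow> ('u \<Rightarrow> 'u \<Rightarrow> bool) \<Rightarrow> (nat \<Rightarrow> 'u) \<Rightarrow> 'u fm \<Rightarrow> bool" where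
  "sat D R e FFalse = False"
| "sat D R e (Rel s t) = R (tval e s) (tval e t)"
| "sat D R e (Eq s t) = (tval e s = tval e t)"
| "sat D R e (Neg \<phi>) = (\<not> sat D R e \<phi>)"
| "sat D R e (Conj \<phi> \<psi>) = (sat D R e \<phi> \<and> sat D R e \<psi>)"
| "sat D R e (Ex \<phi>) = (\<exists>u\<in>D. sat D R (case_nat u e) \<phi>)"

fun tfv :: "'u trm \<Rightarrow> nat set" where
  "tfv (Var i) = {i}"
| "tfv (Par a) = {}"

fun fv :: "'u fm \<Rightarrow> nat set" where
  "fv FFalse = {}"
| "fv (Rel s t) = tfv s \<union> tfv t"
| "fv (Eq s t) = tfv s \<union> tfv t"
| "fv (Neg \<phi>) = fv \<phi>"
| "fv (Conj \<phi> \<psi>) = fv \<phi> \<union> fv \<psi>"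
| "fv (Ex \<phi>) = (\<lambda>i. i - 1) ` (fv \<phi> - {0})"

fun tpar :: "'u trm \<Rightarrow> 'u set" where
  "tpar (Var i) = {}"
| "tpar (Par a) = {a}"

fun params :: "'u fm \<Rightarrow> 'u set" where
  "params FFalse = {}"
| "params (Rel s t) = tpar s \<union> tpar t"
| "params (Eq s t) = tpar s \<union> tpar t"
| "params (Neg \<phi>) = params \<phi>"
| "params (Conj \<phi> \<psi>) = params \<phi> \<union> params \<psi>"
| "params (Ex \<phi>) = params \<phi>"

fun norel :: "'u fm \<Rightarrow> bool" where
  "norel FFalse = True"
| "norel (Rel s t) = False"
| "norel (Eq s t) = True"
| "norel (Neg \<phi>) = norel \<phi>"
| "norel (Conj \<phi> \<psi>) = (norel \<phi> \<and> norel \<psi>)"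
| "norel (Ex \<phi>) = norel \<phi>"

text \<open>Instantiation: free variable i+1 (at binder depth k: k+i+1) is replaced by the
  parameter a!i, for i < length a; the variable x = Var 0 is left alone.\<close>
fun tinst :: "nat \<Rightarrow> 'u list \<Rightarrow> 'u trm \<Rightarrow> 'u trm" where
  "tinst k a (Var i) = (if k < i \<and> i - k - 1 < length a then Par (a ! (i - k - 1)) else Var i)"
| "tinst k a (Par b) = Par b"

fun inst :: "nat \<Rightarrow> 'u list \<Rightarrow> 'u fm \<Rightarrow> 'u fm" where
  "inst k a FFalse = FFalse"
| "inst k a (Rel s t) = Rel (tinst k a s) (tinst k a t)"
| "inst k a (Eq s t) = Eq (tinst k a s) (tinst k a t)"
| "inst k a (Neg \<phi>) = Neg (inst k a \<phi>)"
| "inst k a (Conj \<phi> \<psi>) = Conj (inst k a \<phi>) (inst k a \<psi>)"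
| "inst k a (Ex \<phi>) = Ex (inst (Suc k) a \<phi>)"

definition rado_model :: "('u \<Rightarrow> 'u \<Rightarrow> bool) \<Rightarrow> bool" where
  "rado_model R \<longleftrightarrow> (\<forall>x. \<not> R x x) \<and> (\<forall>x y. R x y \<longrightarrow> R y x) \<and>
     (\<forall>A B. finite A \<longrightarrow> finite B \<longrightarrow> A \<inter> B = {} \<longrightarrow>
        (\<exists>z. z \<notin> A \<union> B \<and> (\<forall>a\<in>A. R z a) \<and> (\<forall>b\<in>B. \<not> R z b)))"

text \<open>Monster-model requirement used here: aleph_1-saturation.\<close>
definition aleph1_saturated :: "('u \<Rightarrow> 'u \<Rightarrow> bool) \<Rightarrow> bool" where
  "aleph1_saturated R \<longleftrightarrow> (\<forall>A \<Sigma>. countable A \<longrightarrow>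
     (\<forall>\<phi>\<in>\<Sigma>. fv \<phi> \<subseteq> {0} \<and> params \<phi> \<subseteq> A) \<longrightarrow>
     (\<forall>\<Sigma>0\<subseteq>\<Sigma>. finite \<Sigma>0 \<longrightarrow> (\<exists>u. \<forall>\<phi>\<in>\<Sigma>0. sat UNIV R (\<lambda>_. u) \<phi>)) \<longrightarrow>
     (\<exists>u. \<forall>\<phi>\<in>\<Sigma>. sat UNIV R (\<lambda>_. u) \<phi>))"

definition elem_sub :: "('u \<Rightarrow> 'u \<Rightarrow> bool) \<Rightarrow> 'u set \<Rightarrow> bool" where
  "elem_sub R M \<longleftrightarrow> (\<forall>\<phi> e. params \<phi> \<subseteq> M \<longrightarrow> range e \<subseteq> M \<longrightarrow>
      (sat M R e \<phi> \<longleftrightarrow> sat UNIV R e \<phi>))"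

text \<open>L_x(U): formulas with free variables among {x} = {Var 0}, parameters from U = UNIV.\<close>
definition Lx :: "'u fm set" where "Lx = {\<phi>. fv \<phi> \<subseteq> {0}}"

definition holds :: "('u \<Rightarrow> 'u \<Rightarrow> bool) \<Rightarrow> 'u fm \<Rightarrow> 'u \<Rightarrow> bool" where
  "holds R \<phi> u = sat UNIV R (\<lambda>_. u) \<phi>"

definition keisler_measure :: "('u \<Rightarrow> 'u \<Rightarrow> bool) \<Rightarrow> ('u fm \<Rightarrow> real) \<Rightarrow> bool" where
  "keisler_measure R \<mu> \<longleftrightarrow>
     (\<forall>\<phi>\<in>Lx. 0 \<le> \<mu> \<phi>) \<and>
     (\<forall>\<phi>\<in>Lx. \<forall>\<psi>\<in>Lx. (\<forall>u. holds R \<phi> u \<longleftrightarrow> holds R \<psi> u) \<longrightarrow> \<mu> \<phi> = \<mu> \<psi>) \<and>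
     \<mu> TT = 1 \<and>
     (\<forall>\<phi>\<in>Lx. \<forall>\<psi>\<in>Lx. (\<forall>u. \<not> (holds R \<phi> u \<and> holds R \<psi> u)) \<longrightarrow>
        \<mu> (Disj \<phi> \<psi>) = \<mu> \<phi> + \<mu> \<psi>)"

definition same_type_over :: "('u \<Rightarrow> 'u \<Rightarrow> bool) \<Rightarrow> 'u set \<Rightarrow> 'u list \<Rightarrow> 'u list \<Rightarrow> bool" where
  "same_type_over R M a b \<longleftrightarrow> length a = length b \<and>
     (\<forall>\<psi>. params \<psi> \<subseteq> M \<longrightarrow> fv \<psi> \<subseteq> {..<length a} \<longrightarrow>
        (sat UNIV R (nth a) \<psi> \<longleftrightarrow> sat UNIV R (nth b) \<psi>))"

text \<open>M-invariance: mu(phi(x,a)) = mu(phi(x,b)) for L-formulas phi(x,y1..yn)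
  (x = Var 0, y_i = Var i) and a \<equiv>_M b.\<close>
definition M_invariant :: "('u \<Rightarrow> 'u \<Rightarrow> bool) \<Rightarrow> 'u set \<Rightarrow> ('u fm \<Rightarrow> real) \<Rightarrow> bool" where
  "M_invariant R M \<mu> \<longleftrightarrow> (\<forall>\<phi> a b. params \<phi> = {} \<longrightarrow> fv \<phi> \<subseteq> {..length a} \<longrightarrow>
     same_type_over R M a b \<longrightarrow> \<mu> (inst 0 a \<phi>) = \<mu> (inst 0 b \<phi>))"

text \<open>By quantifier elimination a non-realised type p over M is determined by the set
  {a \<in> M. R(x,a) \<in> p}, and every subset of M arises; so S*_x(M) is identified with
  the (extensional) functions M \<rightarrow> bool, with its product (= Borel) sigma-algebra.
  lambda is then the fair coin-flipping product measure.\<close>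
definition lam :: "'u set \<Rightarrow> ('u \<Rightarrow> bool) measure" where
  "lam M = PiM M (\<lambda>_. measure_pmf (bernoulli_pmf (1/2)))"

text \<open>tp(c/M) for c \<notin> M.\<close>
definition tpM :: "('u \<Rightarrow> 'u \<Rightarrow> bool) \<Rightarrow> 'u set \<Rightarrow> 'u \<Rightarrow> ('u \<Rightarrow> bool)" where
  "tpM R M c = restrict (\<lambda>a. R c a) M"

definition unit_interval :: "real measure" where
  "unit_interval = restrict_space lborel {0..1}"

definition measure_iso :: "'a measure \<Rightarrow> ('a \<Rightarrow> real) \<Rightarrow> bool" where
  "measure_iso L F \<longleftrightarrow> bij_betw F (space L) {0..1} \<and>
     F \<in> L \<rightarrow>\<^sub>M unit_interval \<and>
     the_inv_into (space L) F \<in> unit_interval \<rightarrow>\<^sub>M L \<and>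
     (\<forall>S\<in>sets L. emeasure unit_interval (F ` S) = emeasure L S)"

definition borel_graphon :: "(real \<Rightarrow> real \<Rightarrow> real) \<Rightarrow> bool" where
  "borel_graphon W \<longleftrightarrow>
     (\<forall>x\<in>{0..1}. \<forall>y\<in>{0..1}. W x y = W y x \<and> 0 \<le> W x y \<and> W x y \<le> 1) \<and>
     case_prod W \<in> borel_measurable (restrict_space borel ({0..1} \<times> {0..1}))"

definition conjR :: "'u list \<Rightarrow> 'u fm" where
  "conjR xs = foldr (\<lambda>a \<phi>. Conj (Rel (Var 0) (Par a)) \<phi>) xs TT"

definition conjNR :: "'u list \<Rightarrow> 'u fm" where
  "conjNR xs = foldr (\<lambda>a \<phi>. Conj (Neg (Rel (Var 0) (Par a))) \<phi>) xs TT"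

text \<open>The basic formula with A = set as, B = set bs, C = set cs, D = set ds and E.\<close>
definition basic_fm :: "'u list \<Rightarrow> 'u list \<Rightarrow> 'u list \<Rightarrow> 'u list \<Rightarrow> 'u fm \<Rightarrow> 'u fm" where
  "basic_fm as bs cs ds E =
     Conj (conjR as) (Conj (conjNR bs) (Conj (conjR cs) (Conj (conjNR ds) E)))"

definition is_basic :: "'u set \<Rightarrow> 'u list \<Rightarrow> 'u list \<Rightarrow> 'u list \<Rightarrow> 'u list \<Rightarrow> 'u fm \<Rightarrow> bool" where
  "is_basic M as bs cs ds E \<longleftrightarrow>
     set as \<subseteq> M \<and> set bs \<subseteq> M \<and> set as \<inter> set bs = {} \<and>
     set cs \<inter> M = {} \<and> set ds \<inter> M = {} \<and> set cs \<inter> set ds = {} \<and>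
     norel E \<and> E \<in> Lx"

definition trivial_E :: "('u \<Rightarrow> 'u \<Rightarrow> bool) \<Rightarrow> 'u fm \<Rightarrow> bool" where
  "trivial_E R E \<longleftrightarrow> (\<exists>S. finite S \<and> (\<forall>u. holds R E u \<longrightarrow> u \<in> S))"

definition muW :: "('u \<Rightarrow> 'u \<Rightarrow> bool) \<Rightarrow> 'u set \<Rightarrow> (real \<Rightarrow> real \<Rightarrow> real) \<Rightarrow> (('u \<Rightarrow> bool) \<Rightarrow> real)
     \<Rightarrow> 'u list \<Rightarrow> 'u list \<Rightarrow> 'u list \<Rightarrow> 'u list \<Rightarrow> 'u fm \<Rightarrow> real" where
  "muW R M W F as bs cs ds E =
     (if trivial_E R E then 0 else
      (LINT p|lam M.
         indicator {q. (\<forall>a\<in>set as. q a) \<and> (\<forall>b\<in>set bs. \<not> q b)} p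
         * (\<Prod>c\<in>set cs. W (F p) (F (tpM R M c)))
         * (\<Prod>d\<in>set ds. 1 - W (F p) (F (tpM R M d)))))"

end

(*
  For a type p over M, let x be adjacent to each parameter s independently with probability
  f_p(s): p(s) itself for s in M, and W(p, tp(s/M)) for s outside M. By quantifier elimination
  for the Rado graph (a back-and-forth argument using the extension axioms), whether phi holds
  of an element outside the parameters of phi depends only on its adjacency pattern to them, so
  the probability of phi under the random pattern is a finitely additive probability measure
  mu_p. It gives every point measure zero, and it is M-invariant because tuples of the same type
  over M have the same equality type, the same edges and the same adjacency probabilities.
  mu_W is the lambda-average of the mu_p.
*)
theory Submission
  imports Defs
begin

lemma finite_tfv [simp]: "finite (tfv t)"
  by (cases t) auto

lemma finite_tpar [simp]: "finite (tpar t)"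
  by (cases t) auto

lemma finite_fv [simp]: "finite (fv \<phi>)"
  by (induction \<phi>) auto

lemma finite_params [simp]: "finite (params \<phi>)"
  by (induction \<phi>) auto

lemma holds_Disj: "holds R (Disj \<phi> \<psi>) u \<longleftrightarrow> holds R \<phi> u \<or> holds R \<psi> u"
  by (simp add: holds_def Disj_def)

lemma params_Disj: "params (Disj \<phi> \<psi>) = params \<phi> \<union> params \<psi>"
  by (simp add: Disj_def)

lemma sat_conjR: "sat D R e (conjR xs) \<longleftrightarrow> (\<forall>a\<in>set xs. R (e 0) a)"
  by (induction xs) (auto simp: conjR_def TT_def)

lemma sat_conjNR: "sat D R e (conjNR xs) \<longleftrightarrow> (\<forall>a\<in>set xs. \<not> R (e 0) a)"
  by (induction xs) (auto simp: conjNR_def TT_def)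

lemma params_conjR: "params (conjR xs) = set xs"
  by (induction xs) (auto simp: conjR_def TT_def)

lemma params_conjNR: "params (conjNR xs) = set xs"
  by (induction xs) (auto simp: conjNR_def TT_def)

lemma holds_basic_fm:
  "holds R (basic_fm as bs cs ds E) u \<longleftrightarrow>
    (\<forall>a\<in>set as \<union> set cs. R u a) \<and> (\<forall>b\<in>set bs \<union> set ds. \<not> R u b) \<and> holds R E u"
  by (auto simp: holds_def basic_fm_def sat_conjR sat_conjNR)

lemma params_basic_fm:
  "params (basic_fm as bs cs ds E) = (set as \<union> set cs) \<union> (set bs \<union> set ds) \<union> params E"
  by (auto simp: basic_fm_def params_conjR params_conjNR)

definition inst_env :: "nat \<Rightarrow> 'u list \<Rightarrow> (nat \<Rightarrow> 'u) \<Rightarrow> nat \<Rightarrow> 'u" where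
  "inst_env k a e i = (if k < i \<and> i - k - 1 < length a then a ! (i - k - 1) else e i)"

lemma tval_tinst: "tval e (tinst k a t) = tval (inst_env k a e) t"
  by (cases t) (auto simp: inst_env_def)

lemma inst_env_Suc: "inst_env (Suc k) a (case_nat u e) = case_nat u (inst_env k a e)"
  by (auto simp: inst_env_def fun_eq_iff split: nat.split)

lemma sat_inst: "sat D R e (inst k a \<phi>) \<longleftrightarrow> sat D R (inst_env k a e) \<phi>"
  by (induction \<phi> arbitrary: k e) (auto simp: tval_tinst inst_env_Suc)

lemma tpar_tinst: "tpar (tinst k a t) \<subseteq> tpar t \<union> set a"
  by (cases t) auto

lemma params_inst: "params (inst k a \<phi>) \<subseteq> params \<phi> \<union> set a"
  by (induction \<phi> arbitrary: k) (use tpar_tinst in fastforce)+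

section \<open>Quantifier elimination for the Rado graph by back and forth\<close>

lemma rado_irrefl: "rado_model R \<Longrightarrow> \<not> R x x"
  unfolding rado_model_def by blast

lemma rado_sym: "rado_model R \<Longrightarrow> R x y \<longleftrightarrow> R y x"
  unfolding rado_model_def by metis

lemma rado_extension:
  assumes "rado_model R" "finite A" "finite B" "A \<inter> B = {}"
  obtains z where "z \<notin> A \<union> B" "\<forall>a\<in>A. R z a" "\<forall>b\<in>B. \<not> R z b"
proof -
  have "\<forall>A B. finite A \<longrightarrow> finite B \<longrightarrow> A \<inter> B = {} \<longrightarrow>
      (\<exists>z. z \<notin> A \<union> B \<and> (\<forall>a\<in>A. R z a) \<and> (\<forall>b\<in>B. \<not> R z b))"
    using assms(1) unfolding rado_model_def by (elim conjE)
  with assms(2-4) that show ?thesis by meson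
qed

lemma rado_infinite_UNIV:
  assumes "rado_model (R :: 'u \<Rightarrow> 'u \<Rightarrow> bool)"
  shows "infinite (UNIV :: 'u set)"
proof
  assume "finite (UNIV :: 'u set)"
  then obtain z :: 'u where "z \<notin> {} \<union> UNIV"
    using rado_extension[OF assms, of "{}" UNIV] by auto
  then show False by simp
qed

text \<open>With \<open>keepR = False\<close> only equality is preserved, which is all that formulas
  without \<open>R\<close> see.\<close>
definition partial_iso :: "bool \<Rightarrow> ('u \<Rightarrow> 'u \<Rightarrow> bool) \<Rightarrow> ('u \<times> 'u) set \<Rightarrow> bool" where
  "partial_iso keepR R P \<longleftrightarrow>
     (\<forall>x y x' y'. (x, y) \<in> P \<longrightarrow> (x', y') \<in> P \<longrightarrow>
        (x = x' \<longleftrightarrow> y = y') \<and> (keepR \<longrightarrow> (R x x' \<longleftrightarrow> R y y')))"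

lemma partial_iso_pairD:
  "partial_iso keepR R P \<Longrightarrow> (x, y) \<in> P \<Longrightarrow> (x', y') \<in> P \<Longrightarrow>
    (x = x' \<longleftrightarrow> y = y') \<and> (keepR \<longrightarrow> (R x x' \<longleftrightarrow> R y y'))"
  unfolding partial_iso_def by simp

lemma partial_iso_subset: "partial_iso keepR R P \<Longrightarrow> Q \<subseteq> P \<Longrightarrow> partial_iso keepR R Q"
  unfolding partial_iso_def by (simp add: subset_iff)

lemma partial_iso_swap: "partial_iso keepR R P \<Longrightarrow> partial_iso keepR R (prod.swap ` P)"
  unfolding partial_iso_def by auto

lemma partial_iso_insert:
  assumes "rado_model R" "partial_iso keepR R P"
    and "\<And>x y. (x, y) \<in> P \<Longrightarrow> (u = x \<longleftrightarrow> v = y) \<and> (keepR \<longrightarrow> (R u x \<longleftrightarrow> R v y))"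
  shows "partial_iso keepR R (insert (u, v) P)"
  unfolding partial_iso_def
proof (intro allI impI)
  fix x y x' y' assume "(x, y) \<in> insert (u, v) P" "(x', y') \<in> insert (u, v) P"
  then consider "x = u" "y = v" "x' = u" "y' = v" | "x = u" "y = v" "(x', y') \<in> P"
    | "(x, y) \<in> P" "x' = u" "y' = v" | "(x, y) \<in> P" "(x', y') \<in> P"
    by blast
  then show "(x = x' \<longleftrightarrow> y = y') \<and> (keepR \<longrightarrow> (R x x' \<longleftrightarrow> R y y'))"
  proof cases
    case 1
    then show ?thesis using rado_irrefl[OF assms(1)] by simp
  next
    case 2
    then show ?thesis using assms(3) by simp
  next
    case 3
    then show ?thesis using assms(3) rado_sym[OF assms(1)] by metis
  next
    case 4
    then show ?thesis using assms(2) unfolding partial_iso_def by simp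
  qed
qed

lemma partial_iso_extend:
  assumes rado: "rado_model R" and "finite P" and iso: "partial_iso keepR R P"
  shows "\<exists>v. partial_iso keepR R (insert (u, v) P)"
proof (cases "u \<in> fst ` P")
  case True
  then obtain v where "(u, v) \<in> P" by force
  then have "insert (u, v) P = P" by blast
  then show ?thesis using iso by metis
next
  case False
  define A where "A = {y. \<exists>x. (x, y) \<in> P \<and> keepR \<and> R u x}"
  define B where "B = {y. \<exists>x. (x, y) \<in> P \<and> \<not> (keepR \<and> R u x)}"
  have "A \<union> B = snd ` P" unfolding A_def B_def by force
  then have "finite A" "finite B" using \<open>finite P\<close> by (metis finite_Un finite_imageI)+
  moreover have "A \<inter> B = {}"
    using iso unfolding A_def B_def partial_iso_def by fast
  ultimately obtain v where v: "v \<notin> A \<union> B" "\<forall>y\<in>A. R v y" "\<forall>y\<in>B. \<not> R v y"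
    using rado_extension[OF rado] by metis
  have "(u = x \<longleftrightarrow> v = y) \<and> (keepR \<longrightarrow> (R u x \<longleftrightarrow> R v y))" if "(x, y) \<in> P" for x y
    using False v that unfolding A_def B_def by force
  then show ?thesis using partial_iso_insert[OF rado iso] by blast
qed

definition env_pairs :: "(nat \<Rightarrow> 'u) \<Rightarrow> (nat \<Rightarrow> 'u) \<Rightarrow> 'u fm \<Rightarrow> ('u \<times> 'u) set" where
  "env_pairs e e' \<phi> = (\<lambda>i. (e i, e' i)) ` fv \<phi> \<union> (\<lambda>a. (a, a)) ` params \<phi>"

lemma tval_pair_in_env_pairs:
  "tfv t \<subseteq> fv \<phi> \<Longrightarrow> tpar t \<subseteq> params \<phi> \<Longrightarrow> (tval e t, tval e' t) \<in> env_pairs e e' \<phi>"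
  unfolding env_pairs_def by (cases t) auto

lemma env_pairs_swap: "env_pairs e' e \<phi> = prod.swap ` env_pairs e e' \<phi>"
  unfolding env_pairs_def by auto

lemma env_pairs_Ex:
  "env_pairs (case_nat u e) (case_nat v e') \<psi> \<subseteq> insert (u, v) (env_pairs e e' (Ex \<psi>))"
  unfolding env_pairs_def by (force split: nat.split)

lemma env_pairs_inst_env:
  assumes "params \<phi> = {}" "fv \<phi> \<subseteq> {..length a}" "length b = length a"
  shows "env_pairs (inst_env 0 a e) (inst_env 0 b e') \<phi> \<subseteq>
    insert (e 0, e' 0) ((\<lambda>k. (a ! k, b ! k)) ` {..<length a})"
proof -
  have "(inst_env 0 a e i, inst_env 0 b e' i) \<in>
      insert (e 0, e' 0) ((\<lambda>k. (a ! k, b ! k)) ` {..<length a})" if "i \<in> fv \<phi>" for i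
  proof (cases i)
    case 0
    then show ?thesis by (simp add: inst_env_def)
  next
    case (Suc k)
    with that assms(2) have "k < length a" by auto
    with Suc assms(3) show ?thesis by (auto simp: inst_env_def)
  qed
  then show ?thesis using assms(1) unfolding env_pairs_def by auto
qed

lemma sat_eq_if_partial_iso:
  assumes rado: "rado_model R"
  shows "keepR \<or> norel \<phi> \<Longrightarrow> partial_iso keepR R (env_pairs e e' \<phi>) \<Longrightarrow>
    sat UNIV R e \<phi> \<longleftrightarrow> sat UNIV R e' \<phi>"
proof (induction \<phi> arbitrary: e e')
  case (Rel s t)
  have "(tval e s, tval e' s) \<in> env_pairs e e' (Rel s t)" "(tval e t, tval e' t) \<in> env_pairs e e' (Rel s t)"
    by (auto intro: tval_pair_in_env_pairs)
  with Rel show ?case by (auto dest: partial_iso_pairD)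
next
  case (Eq s t)
  have "(tval e s, tval e' s) \<in> env_pairs e e' (Eq s t)" "(tval e t, tval e' t) \<in> env_pairs e e' (Eq s t)"
    by (auto intro: tval_pair_in_env_pairs)
  with Eq show ?case by (auto dest: partial_iso_pairD)
next
  case (Conj \<phi> \<psi>)
  have "env_pairs e e' \<phi> \<subseteq> env_pairs e e' (Conj \<phi> \<psi>)" "env_pairs e e' \<psi> \<subseteq> env_pairs e e' (Conj \<phi> \<psi>)"
    unfolding env_pairs_def by auto
  then have "partial_iso keepR R (env_pairs e e' \<phi>)" "partial_iso keepR R (env_pairs e e' \<psi>)"
    using Conj.prems(2) by (metis partial_iso_subset)+
  moreover have "keepR \<or> norel \<phi>" "keepR \<or> norel \<psi>"
    using Conj.prems(1) by auto
  ultimately show ?case using Conj.IH by simp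
next
  case (Ex \<psi>)
  have forth: "sat UNIV R e2 (Ex \<psi>)"
    if iso: "partial_iso keepR R (env_pairs e1 e2 (Ex \<psi>))" and "sat UNIV R e1 (Ex \<psi>)" for e1 e2
  proof -
    obtain u where u: "sat UNIV R (case_nat u e1) \<psi>" using \<open>sat UNIV R e1 (Ex \<psi>)\<close> by auto
    have "finite (env_pairs e1 e2 (Ex \<psi>))" unfolding env_pairs_def by simp
    then obtain v where "partial_iso keepR R (insert (u, v) (env_pairs e1 e2 (Ex \<psi>)))"
      using partial_iso_extend[OF rado _ iso] by blast
    then have "partial_iso keepR R (env_pairs (case_nat u e1) (case_nat v e2) \<psi>)"
      by (rule partial_iso_subset[OF _ env_pairs_Ex])
    then show ?thesis using Ex.IH Ex.prems(1) u by auto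
  qed
  have "partial_iso keepR R (env_pairs e' e (Ex \<psi>))"
    by (subst env_pairs_swap) (rule partial_iso_swap[OF Ex.prems(2)])
  then show ?case using forth[OF Ex.prems(2)] forth by blast
qed (auto simp: env_pairs_def)

lemma holds_eq_outside_params:
  assumes rado: "rado_model R" and "u \<notin> params \<phi>" "v \<notin> params \<phi>"
    and "norel \<phi> \<or> (\<forall>s\<in>params \<phi>. R u s \<longleftrightarrow> R v s)"
  shows "holds R \<phi> u \<longleftrightarrow> holds R \<phi> v"
proof -
  define keepR where "keepR \<longleftrightarrow> \<not> norel \<phi>"
  have "partial_iso keepR R (insert (u, v) ((\<lambda>a. (a, a)) ` params \<phi>))"
    using assms unfolding keepR_def by (intro partial_iso_insert) (auto simp: partial_iso_def)
  moreover have "env_pairs (\<lambda>_. u) (\<lambda>_. v) \<phi> \<subseteq> insert (u, v) ((\<lambda>a. (a, a)) ` params \<phi>)"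
    unfolding env_pairs_def by auto
  ultimately have "partial_iso keepR R (env_pairs (\<lambda>_. u) (\<lambda>_. v) \<phi>)"
    by (rule partial_iso_subset)
  then show ?thesis
    unfolding holds_def by (intro sat_eq_if_partial_iso[OF rado]) (simp_all add: keepR_def)
qed

lemma norel_holds_iff_nontrivial:
  assumes rado: "rado_model R" and "norel E" and u: "u \<notin> params E"
  shows "holds R E u \<longleftrightarrow> \<not> trivial_E R E"
proof
  assume "holds R E u"
  then have cofinite: "- params E \<subseteq> {v. holds R E v}"
    using holds_eq_outside_params[OF rado u _ disjI1[OF \<open>norel E\<close>]] by auto
  show "\<not> trivial_E R E"
  proof
    assume "trivial_E R E"
    then obtain S where "finite S" "{v. holds R E v} \<subseteq> S" unfolding trivial_E_def by blast
    with cofinite have "UNIV \<subseteq> S \<union> params E" by blast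
    with \<open>finite S\<close> show False
      using rado_infinite_UNIV[OF rado] by (meson finite_Un finite_params finite_subset)
  qed
next
  assume nontrivial: "\<not> trivial_E R E"
  show "holds R E u"
  proof (rule ccontr)
    assume "\<not> holds R E u"
    then have "\<forall>v. holds R E v \<longrightarrow> v \<in> params E"
      using holds_eq_outside_params[OF rado u _ disjI1[OF \<open>norel E\<close>]] by blast
    then have "trivial_E R E" unfolding trivial_E_def by (auto intro!: exI[of _ "params E"])
    with nontrivial show False ..
  qed
qed

lemma same_type_over_partial_iso:
  assumes "same_type_over R M a b"
  shows "partial_iso True R ((\<lambda>k. (a ! k, b ! k)) ` {..<length a})"
proof -
  have "sat UNIV R (nth a) \<psi> \<longleftrightarrow> sat UNIV R (nth b) \<psi>"
    if "params \<psi> = {}" "fv \<psi> \<subseteq> {..<length a}" for \<psi>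
    using assms that unfolding same_type_over_def by auto
  from this[of "Eq (Var _) (Var _)"] this[of "Rel (Var _) (Var _)"] show ?thesis
    unfolding partial_iso_def by auto
qed

lemma same_type_over_Par:
  assumes "same_type_over R M a b" "k < length a" "m \<in> M"
  shows "a ! k = m \<longleftrightarrow> b ! k = m" "R (a ! k) m \<longleftrightarrow> R (b ! k) m"
proof -
  have "sat UNIV R (nth a) \<psi> \<longleftrightarrow> sat UNIV R (nth b) \<psi>"
    if "params \<psi> \<subseteq> M" "fv \<psi> \<subseteq> {..<length a}" for \<psi>
    using assms(1) that unfolding same_type_over_def by auto
  from this[of "Eq (Var k) (Par m)"] this[of "Rel (Var k) (Par m)"] assms(2,3)
  show "a ! k = m \<longleftrightarrow> b ! k = m" "R (a ! k) m \<longleftrightarrow> R (b ! k) m" by auto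
qed

lemma same_type_over_bij:
  assumes "same_type_over R M a b"
  obtains h where "bij_betw h (set a) (set b)" "\<And>k. k < length a \<Longrightarrow> h (a ! k) = b ! k"
proof
  have len: "length b = length a" using assms unfolding same_type_over_def by simp
  have eq: "a ! k = a ! l \<longleftrightarrow> b ! k = b ! l" if "k < length a" "l < length a" for k l
    using partial_iso_pairD[OF same_type_over_partial_iso[OF assms]] that by blast
  define h where "h x = b ! (SOME k. k < length a \<and> a ! k = x)" for x
  show h: "h (a ! k) = b ! k" if "k < length a" for k
  proof -
    have "\<exists>l. l < length a \<and> a ! l = a ! k" using that by blast
    then have "(SOME l. l < length a \<and> a ! l = a ! k) < length a \<and> a ! (SOME l. l < length a \<and> a ! l = a ! k) = a ! k"
      by (rule someI_ex)
    then show ?thesis unfolding h_def using eq that by blast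
  qed
  show "bij_betw h (set a) (set b)"
  proof (rule bij_betw_imageI)
    show "inj_on h (set a)"
      by (rule inj_onI) (metis eq h in_set_conv_nth)
    show "h ` set a = set b"
    proof
      show "h ` set a \<subseteq> set b" using h len by (auto simp: in_set_conv_nth) blast
      show "set b \<subseteq> h ` set a"
      proof
        fix y assume "y \<in> set b"
        then obtain k where "k < length a" "y = b ! k" using len by (auto simp: in_set_conv_nth)
        then show "y \<in> h ` set a" using h by (metis image_eqI nth_mem)
      qed
    qed
  qed
qed

section \<open>Products of Bernoulli distributions\<close>

definition pattern_pmf :: "('u \<Rightarrow> real) \<Rightarrow> 'u set \<Rightarrow> ('u \<Rightarrow> bool) pmf" where
  "pattern_pmf f S = Pi_pmf S False (\<lambda>s. bernoulli_pmf (f s))"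

lemma pmf_bernoulli_if: "0 \<le> q \<Longrightarrow> q \<le> 1 \<Longrightarrow> pmf (bernoulli_pmf q) b = (if b then q else 1 - q)"
  by (cases b) simp_all

lemma measure_pattern_pmf_subset:
  assumes "finite S'" "S \<subseteq> S'" and "\<And>\<pi> \<pi>'. (\<And>s. s \<in> S \<Longrightarrow> \<pi> s = \<pi>' s) \<Longrightarrow> G \<pi> \<longleftrightarrow> G \<pi>'"
  shows "measure_pmf.prob (pattern_pmf f S') {\<pi>. G \<pi>} = measure_pmf.prob (pattern_pmf f S) {\<pi>. G \<pi>}"
proof -
  have "pattern_pmf f S = map_pmf (\<lambda>\<pi> s. if s \<in> S then \<pi> s else False) (pattern_pmf f S')"
    unfolding pattern_pmf_def using assms(1,2) by (rule Pi_pmf_subset)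
  moreover have "G (\<lambda>s. if s \<in> S then \<pi> s else False) \<longleftrightarrow> G \<pi>" for \<pi>
    by (rule assms(3)) simp
  then have "(\<lambda>\<pi> s. if s \<in> S then \<pi> s else False) -` {\<pi>. G \<pi>} = {\<pi>. G \<pi>}"
    by simp
  ultimately show ?thesis by simp
qed

lemma measure_pattern_pmf_eq_sum:
  assumes "finite S"
  shows "measure_pmf.prob (pattern_pmf f S) X =
    (\<Sum>\<pi>\<in>X \<inter> PiE_dflt S False (\<lambda>_. UNIV). \<Prod>s\<in>S. pmf (bernoulli_pmf (f s)) (\<pi> s))"
proof -
  have "set_pmf (pattern_pmf f S) \<subseteq> PiE_dflt S False (\<lambda>_. UNIV)"
    using set_Pi_pmf_subset[OF assms, of False "\<lambda>s. bernoulli_pmf (f s)"]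
    unfolding pattern_pmf_def PiE_dflt_def by auto
  then have "measure_pmf.prob (pattern_pmf f S) X =
      measure_pmf.prob (pattern_pmf f S) (X \<inter> PiE_dflt S False (\<lambda>_. UNIV))"
    by (metis measure_Int_set_pmf Int_assoc Int_absorb1)
  also have "\<dots> = sum (pmf (pattern_pmf f S)) (X \<inter> PiE_dflt S False (\<lambda>_. UNIV))"
    using assms by (intro measure_measure_pmf_finite finite_Int disjI2 finite_PiE_dflt) auto
  also have "\<dots> = (\<Sum>\<pi>\<in>X \<inter> PiE_dflt S False (\<lambda>_. UNIV). \<Prod>s\<in>S. pmf (bernoulli_pmf (f s)) (\<pi> s))"
    using assms by (intro sum.cong refl) (auto simp: pattern_pmf_def pmf_Pi' PiE_dflt_def)
  finally show ?thesis .
qed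

lemma measure_pattern_pmf_signs:
  assumes "finite P" "finite N" "P \<inter> N = {}" "\<And>s. 0 \<le> f s" "\<And>s. f s \<le> 1"
  shows "measure_pmf.prob (pattern_pmf f (P \<union> N)) {\<pi>. (\<forall>s\<in>P. \<pi> s) \<and> (\<forall>s\<in>N. \<not> \<pi> s)} =
    (\<Prod>s\<in>P. f s) * (\<Prod>s\<in>N. 1 - f s)"
proof -
  have "{\<pi>. (\<forall>s\<in>P. \<pi> s) \<and> (\<forall>s\<in>N. \<not> \<pi> s)} = Pi (P \<union> N) (\<lambda>s. {s \<in> P})"
    using assms(3) by auto
  then have "measure_pmf.prob (pattern_pmf f (P \<union> N)) {\<pi>. (\<forall>s\<in>P. \<pi> s) \<and> (\<forall>s\<in>N. \<not> \<pi> s)} =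
      (\<Prod>s\<in>P \<union> N. pmf (bernoulli_pmf (f s)) (s \<in> P))"
    using assms(1,2) by (simp add: pattern_pmf_def measure_Pi_pmf_Pi measure_pmf_single)
  also have "\<dots> = (\<Prod>s\<in>P. pmf (bernoulli_pmf (f s)) (s \<in> P)) * (\<Prod>s\<in>N. pmf (bernoulli_pmf (f s)) (s \<in> P))"
    using assms(1-3) by (rule prod.union_disjoint)
  also have "\<dots> = (\<Prod>s\<in>P. f s) * (\<Prod>s\<in>N. 1 - f s)"
    using assms(3-5) by (auto simp: pmf_bernoulli_if intro!: arg_cong2[where f = "(*)"] prod.cong)
  finally show ?thesis .
qed

lemma measure_pattern_pmf_reindex:
  assumes "finite A" and h: "bij_betw h A B" and g: "\<And>x. x \<in> A \<Longrightarrow> g (h x) = f x"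
    and G: "\<And>\<rho> \<pi>. (\<And>x. x \<in> A \<Longrightarrow> \<rho> x = \<pi> (h x)) \<Longrightarrow> GA \<rho> \<longleftrightarrow> GB \<pi>"
  shows "measure_pmf.prob (pattern_pmf g B) {\<pi>. GB \<pi>} = measure_pmf.prob (pattern_pmf f A) {\<rho>. GA \<rho>}"
proof -
  let ?h' = "the_inv_into A h"
  let ?to_B = "\<lambda>\<rho> y. if y \<in> B then \<rho> (?h' y) else False"
  let ?to_A = "\<lambda>\<pi> x. if x \<in> A then \<pi> (h x) else False"
  have "finite B" using bij_betw_finite[OF h] \<open>finite A\<close> by simp
  have hA: "h x \<in> B" "?h' (h x) = x" if "x \<in> A" for x
    using h that by (auto simp: bij_betw_def the_inv_into_f_f)
  have hB: "?h' y \<in> A" "h (?h' y) = y" if "y \<in> B" for y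
    using h that by (auto simp: bij_betw_def the_inv_into_into f_the_inv_into_f)
  have "(\<Sum>\<pi>\<in>{\<pi>. GB \<pi>} \<inter> PiE_dflt B False (\<lambda>_. UNIV). \<Prod>y\<in>B. pmf (bernoulli_pmf (g y)) (\<pi> y)) =
      (\<Sum>\<rho>\<in>{\<rho>. GA \<rho>} \<inter> PiE_dflt A False (\<lambda>_. UNIV). \<Prod>x\<in>A. pmf (bernoulli_pmf (f x)) (\<rho> x))"
  proof (rule sum.reindex_bij_witness[where i = ?to_B and j = ?to_A])
    fix \<pi> assume \<pi>: "\<pi> \<in> {\<pi>. GB \<pi>} \<inter> PiE_dflt B False (\<lambda>_. UNIV)"
    show "?to_B (?to_A \<pi>) = \<pi>" using \<pi> hB by (auto simp: PiE_dflt_def fun_eq_iff)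
    show "?to_A \<pi> \<in> {\<rho>. GA \<rho>} \<inter> PiE_dflt A False (\<lambda>_. UNIV)"
      using \<pi> G[of "?to_A \<pi>" \<pi>] by (auto simp: PiE_dflt_def)
    have "(\<Prod>y\<in>B. pmf (bernoulli_pmf (g y)) (\<pi> y)) =
        (\<Prod>x\<in>A. pmf (bernoulli_pmf (g (h x))) (\<pi> (h x)))"
      by (rule prod.reindex_bij_betw[OF h, symmetric])
    also have "\<dots> = (\<Prod>x\<in>A. pmf (bernoulli_pmf (f x)) (?to_A \<pi> x))"
      using g by (intro prod.cong) auto
    finally show "(\<Prod>x\<in>A. pmf (bernoulli_pmf (f x)) (?to_A \<pi> x)) =
        (\<Prod>y\<in>B. pmf (bernoulli_pmf (g y)) (\<pi> y))" by simp
  next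
    fix \<rho> assume \<rho>: "\<rho> \<in> {\<rho>. GA \<rho>} \<inter> PiE_dflt A False (\<lambda>_. UNIV)"
    show "?to_A (?to_B \<rho>) = \<rho>" using \<rho> hA by (auto simp: PiE_dflt_def fun_eq_iff)
    show "?to_B \<rho> \<in> {\<pi>. GB \<pi>} \<inter> PiE_dflt B False (\<lambda>_. UNIV)"
      using \<rho> hA G[of \<rho> "?to_B \<rho>"] by (auto simp: PiE_dflt_def)
  qed
  then show ?thesis
    using \<open>finite A\<close> \<open>finite B\<close> by (simp add: measure_pattern_pmf_eq_sum)
qed

lemma borel_measurable_measure_pattern_pmf:
  assumes "finite S" and [measurable]: "\<And>s. (\<lambda>p. f p s) \<in> borel_measurable L"
    and f: "\<And>p s. p \<in> space L \<Longrightarrow> 0 \<le> f p s \<and> f p s \<le> 1"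
  shows "(\<lambda>p. measure_pmf.prob (pattern_pmf (f p) S) X) \<in> borel_measurable L"
proof -
  have "measure_pmf.prob (pattern_pmf (f p) S) X =
      (\<Sum>\<pi>\<in>X \<inter> PiE_dflt S False (\<lambda>_. UNIV). \<Prod>s\<in>S. if \<pi> s then f p s else 1 - f p s)"
    if "p \<in> space L" for p
    using f[OF that] by (simp add: measure_pattern_pmf_eq_sum[OF \<open>finite S\<close>] pmf_bernoulli_if)
  then show ?thesis by (subst measurable_cong) (simp_all, measurable)
qed

section \<open>The Keisler measure of a random adjacency pattern\<close>

definition realizes_pattern :: "('u \<Rightarrow> 'u \<Rightarrow> bool) \<Rightarrow> 'u set \<Rightarrow> ('u \<Rightarrow> bool) \<Rightarrow> 'u \<Rightarrow> bool" where
  "realizes_pattern R S \<pi> u \<longleftrightarrow> u \<notin> S \<and> (\<forall>s\<in>S. R u s \<longleftrightarrow> \<pi> s)"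

lemma realizes_pattern_exists:
  assumes "rado_model R" "finite S"
  shows "\<exists>u. realizes_pattern R S \<pi> u"
proof -
  have "finite {s\<in>S. \<pi> s}" "finite {s\<in>S. \<not> \<pi> s}" "{s\<in>S. \<pi> s} \<inter> {s\<in>S. \<not> \<pi> s} = {}"
    using assms(2) by auto
  then obtain u where "u \<notin> {s\<in>S. \<pi> s} \<union> {s\<in>S. \<not> \<pi> s}"
      "\<forall>s\<in>{s\<in>S. \<pi> s}. R u s" "\<forall>s\<in>{s\<in>S. \<not> \<pi> s}. \<not> R u s"
    by (rule rado_extension[OF assms(1)])
  then show ?thesis unfolding realizes_pattern_def by auto
qed

lemma realizes_pattern_subset:
  "realizes_pattern R S \<pi> u \<Longrightarrow> S' \<subseteq> S \<Longrightarrow> realizes_pattern R S' \<pi> u"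
  unfolding realizes_pattern_def by auto

text \<open>By quantifier elimination all elements outside \<open>params \<phi>\<close> with adjacency pattern
  \<open>\<pi>\<close> on \<open>params \<phi>\<close> agree on \<open>\<phi>\<close> (\<open>generic_sat_eq_holds\<close>), so the choice of witness
  is irrelevant.\<close>
definition generic_sat :: "('u \<Rightarrow> 'u \<Rightarrow> bool) \<Rightarrow> 'u fm \<Rightarrow> ('u \<Rightarrow> bool) \<Rightarrow> bool" where
  "generic_sat R \<phi> \<pi> = holds R \<phi> (SOME u. realizes_pattern R (params \<phi>) \<pi> u)"

lemma generic_sat_eq_holds:
  assumes rado: "rado_model R" and "params \<phi> \<subseteq> S" and u: "realizes_pattern R S \<pi> u"
  shows "generic_sat R \<phi> \<pi> \<longleftrightarrow> holds R \<phi> u"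
proof -
  let ?v = "SOME v. realizes_pattern R (params \<phi>) \<pi> v"
  have "realizes_pattern R (params \<phi>) \<pi> ?v"
    using realizes_pattern_exists[OF rado finite_params] by (rule someI_ex)
  moreover have "realizes_pattern R (params \<phi>) \<pi> u"
    using realizes_pattern_subset[OF u \<open>params \<phi> \<subseteq> S\<close>] .
  ultimately show ?thesis
    unfolding generic_sat_def realizes_pattern_def by (intro holds_eq_outside_params[OF rado]) auto
qed

lemma generic_sat_cong:
  assumes "\<And>s. s \<in> params \<phi> \<Longrightarrow> \<pi> s = \<pi>' s"
  shows "generic_sat R \<phi> \<pi> \<longleftrightarrow> generic_sat R \<phi> \<pi>'"
proof -
  have "realizes_pattern R (params \<phi>) \<pi> = realizes_pattern R (params \<phi>) \<pi>'"
    using assms unfolding realizes_pattern_def by auto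
  then show ?thesis unfolding generic_sat_def by simp
qed

lemma generic_sat_realizer:
  assumes rado: "rado_model R" and "finite S"
  shows "\<exists>u. \<forall>\<phi>. params \<phi> \<subseteq> S \<longrightarrow> (generic_sat R \<phi> \<pi> \<longleftrightarrow> holds R \<phi> u)"
proof -
  obtain u where "realizes_pattern R S \<pi> u" using realizes_pattern_exists[OF assms] by blast
  then show ?thesis using generic_sat_eq_holds[OF rado] by blast
qed

definition pattern_measure :: "('u \<Rightarrow> 'u \<Rightarrow> bool) \<Rightarrow> ('u \<Rightarrow> real) \<Rightarrow> 'u fm \<Rightarrow> real" where
  "pattern_measure R f \<phi> = measure_pmf.prob (pattern_pmf f (params \<phi>)) {\<pi>. generic_sat R \<phi> \<pi>}"

lemma pattern_measure_superset:
  assumes "finite S" "params \<phi> \<subseteq> S"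
  shows "pattern_measure R f \<phi> = measure_pmf.prob (pattern_pmf f S) {\<pi>. generic_sat R \<phi> \<pi>}"
  unfolding pattern_measure_def using assms
  by (intro measure_pattern_pmf_subset[symmetric] generic_sat_cong) auto

lemma keisler_measure_pattern_measure:
  assumes rado: "rado_model R"
  shows "keisler_measure R (pattern_measure R f)"
  unfolding keisler_measure_def
proof (intro conjI ballI impI)
  fix \<phi>
  show "0 \<le> pattern_measure R f \<phi>" by (simp add: pattern_measure_def)
next
  fix \<phi> \<psi> assume equiv: "\<forall>u. holds R \<phi> u \<longleftrightarrow> holds R \<psi> u"
  let ?S = "params \<phi> \<union> params \<psi>"
  have "generic_sat R \<phi> \<pi> \<longleftrightarrow> generic_sat R \<psi> \<pi>" for \<pi>
    using generic_sat_realizer[OF rado, of ?S \<pi>] equiv by auto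
  then show "pattern_measure R f \<phi> = pattern_measure R f \<psi>"
    by (simp add: pattern_measure_superset[of ?S])
next
  have "generic_sat R TT \<pi>" for \<pi> by (simp add: generic_sat_def holds_def TT_def)
  then show "pattern_measure R f TT = 1" by (simp add: pattern_measure_def)
next
  fix \<phi> \<psi> assume disjoint: "\<forall>u. \<not> (holds R \<phi> u \<and> holds R \<psi> u)"
  let ?S = "params \<phi> \<union> params \<psi>"
  have "(generic_sat R (Disj \<phi> \<psi>) \<pi> \<longleftrightarrow> generic_sat R \<phi> \<pi> \<or> generic_sat R \<psi> \<pi>) \<and>
      \<not> (generic_sat R \<phi> \<pi> \<and> generic_sat R \<psi> \<pi>)" for \<pi>
    using generic_sat_realizer[OF rado, of ?S \<pi>] disjoint by (auto simp: params_Disj holds_Disj)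
  then have "{\<pi>. generic_sat R (Disj \<phi> \<psi>) \<pi>} = {\<pi>. generic_sat R \<phi> \<pi>} \<union> {\<pi>. generic_sat R \<psi> \<pi>}"
    and "{\<pi>. generic_sat R \<phi> \<pi>} \<inter> {\<pi>. generic_sat R \<psi> \<pi>} = {}"
    by auto
  then show "pattern_measure R f (Disj \<phi> \<psi>) = pattern_measure R f \<phi> + pattern_measure R f \<psi>"
    by (simp add: pattern_measure_superset[of ?S] params_Disj measure_pmf.finite_measure_Union)
qed

lemma pattern_measure_Eq_Par:
  assumes rado: "rado_model R"
  shows "pattern_measure R f (Eq (Var 0) (Par a)) = 0"
proof -
  have "\<not> generic_sat R (Eq (Var 0) (Par a)) \<pi>" for \<pi>
  proof -
    obtain u where u: "realizes_pattern R {a} \<pi> u"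
      using realizes_pattern_exists[OF rado, of "{a}"] by auto
    then have "generic_sat R (Eq (Var 0) (Par a)) \<pi> \<longleftrightarrow> holds R (Eq (Var 0) (Par a)) u"
      by (intro generic_sat_eq_holds[OF rado]) auto
    with u show ?thesis by (simp add: holds_def realizes_pattern_def)
  qed
  then show ?thesis by (simp add: pattern_measure_def)
qed

lemma pattern_measure_basic_fm:
  assumes rado: "rado_model R" and "norel E"
    and disjoint: "(set as \<union> set cs) \<inter> (set bs \<union> set ds) = {}"
    and "\<And>s. 0 \<le> f s" "\<And>s. f s \<le> 1"
  shows "pattern_measure R f (basic_fm as bs cs ds E) =
    (if trivial_E R E then 0 else (\<Prod>a\<in>set as \<union> set cs. f a) * (\<Prod>b\<in>set bs \<union> set ds. 1 - f b))"
proof -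
  define P where "P = set as \<union> set cs"
  define N where "N = set bs \<union> set ds"
  let ?\<phi> = "basic_fm as bs cs ds E"
  have gen: "generic_sat R ?\<phi> \<pi> \<longleftrightarrow> \<not> trivial_E R E \<and> (\<forall>s\<in>P. \<pi> s) \<and> (\<forall>s\<in>N. \<not> \<pi> s)" for \<pi>
  proof -
    obtain u where u: "realizes_pattern R (params ?\<phi>) \<pi> u"
      using realizes_pattern_exists[OF rado finite_params] by blast
    then have "u \<notin> params E" "\<forall>s\<in>P \<union> N. R u s \<longleftrightarrow> \<pi> s"
      unfolding realizes_pattern_def params_basic_fm P_def N_def by auto
    then show ?thesis
      using generic_sat_eq_holds[OF rado subset_refl u] norel_holds_iff_nontrivial[OF rado \<open>norel E\<close>]
      by (auto simp: holds_basic_fm P_def N_def)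
  qed
  show ?thesis
  proof (cases "trivial_E R E")
    case True
    then show ?thesis by (simp add: pattern_measure_def gen)
  next
    case False
    have "pattern_measure R f ?\<phi> = measure_pmf.prob (pattern_pmf f (params ?\<phi>))
        {\<pi>. (\<forall>s\<in>P. \<pi> s) \<and> (\<forall>s\<in>N. \<not> \<pi> s)}"
      using False by (simp add: pattern_measure_def gen)
    also have "\<dots> = measure_pmf.prob (pattern_pmf f (P \<union> N)) {\<pi>. (\<forall>s\<in>P. \<pi> s) \<and> (\<forall>s\<in>N. \<not> \<pi> s)}"
      by (rule measure_pattern_pmf_subset) (auto simp: params_basic_fm P_def N_def)
    also have "\<dots> = (\<Prod>s\<in>P. f s) * (\<Prod>s\<in>N. 1 - f s)"
      using disjoint assms(4,5) by (intro measure_pattern_pmf_signs) (auto simp: P_def N_def)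
    finally show ?thesis using False by (simp add: P_def N_def)
  qed
qed

lemma generic_sat_inst_same_type:
  assumes rado: "rado_model R" and st: "same_type_over R M a b"
    and "params \<phi> = {}" and fv: "fv \<phi> \<subseteq> {..length a}"
    and pattern: "\<And>k. k < length a \<Longrightarrow> \<rho> (a ! k) = \<pi> (b ! k)"
  shows "generic_sat R (inst 0 a \<phi>) \<rho> \<longleftrightarrow> generic_sat R (inst 0 b \<phi>) \<pi>"
proof -
  have len: "length b = length a" using st unfolding same_type_over_def by simp
  obtain u where u: "realizes_pattern R (set a) \<rho> u"
    using realizes_pattern_exists[OF rado] by blast
  obtain v where v: "realizes_pattern R (set b) \<pi> v"
    using realizes_pattern_exists[OF rado] by blast
  have "generic_sat R (inst 0 a \<phi>) \<rho> \<longleftrightarrow> sat UNIV R (inst_env 0 a (\<lambda>_. u)) \<phi>"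
    using generic_sat_eq_holds[OF rado _ u] params_inst[of 0 a \<phi>] \<open>params \<phi> = {}\<close>
    by (simp add: holds_def sat_inst)
  moreover have "generic_sat R (inst 0 b \<phi>) \<pi> \<longleftrightarrow> sat UNIV R (inst_env 0 b (\<lambda>_. v)) \<phi>"
    using generic_sat_eq_holds[OF rado _ v] params_inst[of 0 b \<phi>] \<open>params \<phi> = {}\<close>
    by (simp add: holds_def sat_inst)
  moreover have "partial_iso True R (insert (u, v) ((\<lambda>k. (a ! k, b ! k)) ` {..<length a}))"
  proof (rule partial_iso_insert[OF rado same_type_over_partial_iso[OF st]])
    fix x y assume "(x, y) \<in> (\<lambda>k. (a ! k, b ! k)) ` {..<length a}"
    then obtain k where "k < length a" "x = a ! k" "y = b ! k" by blast
    with u v pattern len show "(u = x \<longleftrightarrow> v = y) \<and> (True \<longrightarrow> (R u x \<longleftrightarrow> R v y))"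
      unfolding realizes_pattern_def by auto
  qed
  moreover have "env_pairs (inst_env 0 a (\<lambda>_. u)) (inst_env 0 b (\<lambda>_. v)) \<phi> \<subseteq>
      insert (u, v) ((\<lambda>k. (a ! k, b ! k)) ` {..<length a})"
    using env_pairs_inst_env[OF \<open>params \<phi> = {}\<close> fv len, of "\<lambda>_. u" "\<lambda>_. v"] by simp
  ultimately show ?thesis
    using sat_eq_if_partial_iso[OF rado] partial_iso_subset by blast
qed

lemma pattern_measure_inst_invariant:
  assumes rado: "rado_model R" and st: "same_type_over R M a b"
    and "params \<phi> = {}" "fv \<phi> \<subseteq> {..length a}"
    and f: "\<And>k. k < length a \<Longrightarrow> f (a ! k) = f (b ! k)"
  shows "pattern_measure R f (inst 0 a \<phi>) = pattern_measure R f (inst 0 b \<phi>)"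
proof -
  obtain h where h: "bij_betw h (set a) (set b)" and hk: "\<And>k. k < length a \<Longrightarrow> h (a ! k) = b ! k"
    using same_type_over_bij[OF st] by blast
  have params: "params (inst 0 a \<phi>) \<subseteq> set a" "params (inst 0 b \<phi>) \<subseteq> set b"
    using params_inst[of 0 _ \<phi>] \<open>params \<phi> = {}\<close> by auto
  have "measure_pmf.prob (pattern_pmf f (set b)) {\<pi>. generic_sat R (inst 0 b \<phi>) \<pi>} =
      measure_pmf.prob (pattern_pmf f (set a)) {\<rho>. generic_sat R (inst 0 a \<phi>) \<rho>}"
  proof (rule measure_pattern_pmf_reindex[OF _ h])
    show "f (h x) = f x" if "x \<in> set a" for x
      using that f hk by (metis in_set_conv_nth)
    show "generic_sat R (inst 0 a \<phi>) \<rho> \<longleftrightarrow> generic_sat R (inst 0 b \<phi>) \<pi>"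
      if "\<And>x. x \<in> set a \<Longrightarrow> \<rho> x = \<pi> (h x)" for \<rho> \<pi>
      using assms(1-4) by (rule generic_sat_inst_same_type) (simp add: that hk)
  qed simp
  then show ?thesis
    using pattern_measure_superset[OF _ params(1)] pattern_measure_superset[OF _ params(2)] by simp
qed

section \<open>Averaging over the random type\<close>

lemma keisler_measureD:
  assumes "keisler_measure R \<mu>"
  shows "\<phi> \<in> Lx \<Longrightarrow> 0 \<le> \<mu> \<phi>"
    and "\<phi> \<in> Lx \<Longrightarrow> \<psi> \<in> Lx \<Longrightarrow> \<forall>u. holds R \<phi> u \<longleftrightarrow> holds R \<psi> u \<Longrightarrow> \<mu> \<phi> = \<mu> \<psi>"
    and "\<mu> TT = 1"
    and "\<phi> \<in> Lx \<Longrightarrow> \<psi> \<in> Lx \<Longrightarrow> \<forall>u. \<not> (holds R \<phi> u \<and> holds R \<psi> u) \<Longrightarrow>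
      \<mu> (Disj \<phi> \<psi>) = \<mu> \<phi> + \<mu> \<psi>"
  using assms unfolding keisler_measure_def by blast+

lemma keisler_measure_integral:
  fixes R :: "'u \<Rightarrow> 'u \<Rightarrow> bool" and \<mu> :: "'p \<Rightarrow> 'u fm \<Rightarrow> real"
  assumes "prob_space L" and keisler: "\<And>p. p \<in> space L \<Longrightarrow> keisler_measure R (\<mu> p)"
    and integrable: "\<And>\<phi>. integrable L (\<lambda>p. \<mu> p \<phi>)"
  shows "keisler_measure R (\<lambda>\<phi>. LINT p|L. \<mu> p \<phi>)"
proof -
  interpret prob_space L by fact
  note K = keisler_measureD[OF keisler]
  show ?thesis
    unfolding keisler_measure_def
  proof (intro conjI ballI impI)
    fix \<phi> :: "'u fm" assume "\<phi> \<in> Lx"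
    then show "0 \<le> (LINT p|L. \<mu> p \<phi>)"
      using K(1) by (intro integral_nonneg_AE AE_I2) blast
  next
    fix \<phi> \<psi> :: "'u fm" assume "\<phi> \<in> Lx" "\<psi> \<in> Lx" "\<forall>u. holds R \<phi> u \<longleftrightarrow> holds R \<psi> u"
    then show "(LINT p|L. \<mu> p \<phi>) = (LINT p|L. \<mu> p \<psi>)"
      using K(2) by (intro Bochner_Integration.integral_cong) blast+
  next
    have "(LINT p|L. \<mu> p TT) = (LINT p|L. 1)"
      using K(3) by (intro Bochner_Integration.integral_cong) simp_all
    then show "(LINT p|L. \<mu> p TT) = 1" by (simp add: prob_space)
  next
    fix \<phi> \<psi> :: "'u fm" assume "\<phi> \<in> Lx" "\<psi> \<in> Lx" "\<forall>u. \<not> (holds R \<phi> u \<and> holds R \<psi> u)"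
    then have "(LINT p|L. \<mu> p (Disj \<phi> \<psi>)) = (LINT p|L. \<mu> p \<phi> + \<mu> p \<psi>)"
      using K(4) by (intro Bochner_Integration.integral_cong) blast+
    with integrable show "(LINT p|L. \<mu> p (Disj \<phi> \<psi>)) = (LINT p|L. \<mu> p \<phi>) + (LINT p|L. \<mu> p \<psi>)"
      by simp
  qed
qed

lemma prob_space_lam: "prob_space (lam M)"
  unfolding lam_def by (intro prob_space_PiM prob_space_measure_pmf)

lemma tpM_in_space_lam: "tpM R M c \<in> space (lam M)"
  unfolding lam_def tpM_def by (simp add: space_PiM)

lemma measurable_unit_intervalD:
  assumes "F \<in> L \<rightarrow>\<^sub>M unit_interval"
  shows "F \<in> borel_measurable L" "\<And>p. p \<in> space L \<Longrightarrow> F p \<in> {0..1}"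
proof -
  have "F \<in> L \<rightarrow>\<^sub>M lborel" "F \<in> space L \<rightarrow> {0..1}"
    using assms unfolding unit_interval_def measurable_restrict_space2_iff by auto
  then show "F \<in> borel_measurable L" "\<And>p. p \<in> space L \<Longrightarrow> F p \<in> {0..1}"
    by (auto simp: measurable_lborel2)
qed

lemma borel_measurable_graphon_section:
  assumes W: "borel_graphon W" and F: "F \<in> L \<rightarrow>\<^sub>M unit_interval" and "c \<in> {0..1}"
  shows "(\<lambda>p. W (F p) c) \<in> borel_measurable L"
proof -
  have "(\<lambda>p. (F p, c)) \<in> L \<rightarrow>\<^sub>M borel"
    using measurable_unit_intervalD(1)[OF F] by (simp add: borel_prod[symmetric])
  moreover have "(\<lambda>p. (F p, c)) \<in> space L \<rightarrow> {0..1} \<times> {0..1}"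
    using measurable_unit_intervalD(2)[OF F] \<open>c \<in> {0..1}\<close> by auto
  ultimately have "(\<lambda>p. (F p, c)) \<in> L \<rightarrow>\<^sub>M restrict_space borel ({0..1} \<times> {0..1})"
    by (simp add: measurable_restrict_space2_iff)
  moreover have "case_prod W \<in> borel_measurable (restrict_space borel ({0..1} \<times> {0..1}))"
    using W unfolding borel_graphon_def by blast
  ultimately have "case_prod W \<circ> (\<lambda>p. (F p, c)) \<in> borel_measurable L"
    by (rule measurable_comp)
  then show ?thesis by (simp add: o_def)
qed

text \<open>The probability that \<open>x\<close> is adjacent to \<open>s\<close> when \<open>x\<close> has type \<open>p\<close> over \<open>M\<close>.\<close>
definition edge_prob :: "('u \<Rightarrow> 'u \<Rightarrow> bool) \<Rightarrow> 'u set \<Rightarrow> (real \<Rightarrow> real \<Rightarrow> real) \<Rightarrow>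
    (('u \<Rightarrow> bool) \<Rightarrow> real) \<Rightarrow> ('u \<Rightarrow> bool) \<Rightarrow> 'u \<Rightarrow> real" where
  "edge_prob R M W F p s = (if s \<in> M then of_bool (p s) else W (F p) (F (tpM R M s)))"

lemma edge_prob_bounds:
  assumes "borel_graphon W" "F \<in> lam M \<rightarrow>\<^sub>M unit_interval" "p \<in> space (lam M)"
  shows "0 \<le> edge_prob R M W F p s" "edge_prob R M W F p s \<le> 1"
proof -
  have "F p \<in> {0..1}" "F (tpM R M s) \<in> {0..1}"
    using measurable_unit_intervalD(2)[OF assms(2) assms(3)]
      measurable_unit_intervalD(2)[OF assms(2) tpM_in_space_lam] by auto
  with assms(1) show "0 \<le> edge_prob R M W F p s" "edge_prob R M W F p s \<le> 1"
    unfolding edge_prob_def borel_graphon_def by auto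
qed

lemma borel_measurable_edge_prob:
  assumes "borel_graphon W" and F: "F \<in> lam M \<rightarrow>\<^sub>M unit_interval"
  shows "(\<lambda>p. edge_prob R M W F p s) \<in> borel_measurable (lam M)"
proof (cases "s \<in> M")
  case True
  have "(\<lambda>p. p s) \<in> lam M \<rightarrow>\<^sub>M measure_pmf (bernoulli_pmf (1/2))"
    unfolding lam_def using True by (rule measurable_component_singleton)
  then show ?thesis using True unfolding edge_prob_def by simp
next
  case False
  then show ?thesis
    using borel_measurable_graphon_section[OF assms measurable_unit_intervalD(2)[OF F tpM_in_space_lam]]
    unfolding edge_prob_def by simp
qed

lemma edge_prob_same_type:
  assumes "same_type_over R M a b" "k < length a"
  shows "edge_prob R M W F p (a ! k) = edge_prob R M W F p (b ! k)"
proof (cases "a ! k \<in> M")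
  case True
  then show ?thesis using same_type_over_Par(1)[OF assms True] by simp
next
  case False
  then have "b ! k \<notin> M" using same_type_over_Par(1)[OF assms] by metis
  moreover have "tpM R M (a ! k) = tpM R M (b ! k)"
    using same_type_over_Par(2)[OF assms] unfolding tpM_def by (auto simp: fun_eq_iff)
  ultimately show ?thesis using False by (simp add: edge_prob_def)
qed

lemma integrable_pattern_measure_edge_prob:
  assumes "borel_graphon W" "F \<in> lam M \<rightarrow>\<^sub>M unit_interval"
  shows "integrable (lam M) (\<lambda>p. pattern_measure R (edge_prob R M W F p) \<phi>)"
proof -
  interpret prob_space "lam M" by (rule prob_space_lam)
  show ?thesis
  proof (rule integrable_const_bound[where B = 1])
    show "AE p in lam M. norm (pattern_measure R (edge_prob R M W F p) \<phi>) \<le> 1"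
      by (simp add: pattern_measure_def)
    show "(\<lambda>p. pattern_measure R (edge_prob R M W F p) \<phi>) \<in> borel_measurable (lam M)"
      unfolding pattern_measure_def using edge_prob_bounds[OF assms]
      by (intro borel_measurable_measure_pattern_pmf borel_measurable_edge_prob[OF assms]) auto
  qed
qed

definition graphon_measure :: "('u \<Rightarrow> 'u \<Rightarrow> bool) \<Rightarrow> 'u set \<Rightarrow> (real \<Rightarrow> real \<Rightarrow> real) \<Rightarrow>
    (('u \<Rightarrow> bool) \<Rightarrow> real) \<Rightarrow> 'u fm \<Rightarrow> real" where
  "graphon_measure R M W F \<phi> = (LINT p|lam M. pattern_measure R (edge_prob R M W F p) \<phi>)"

lemma keisler_measure_graphon_measure:
  assumes "rado_model R" "borel_graphon W" "F \<in> lam M \<rightarrow>\<^sub>M unit_interval"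
  shows "keisler_measure R (graphon_measure R M W F)"
  unfolding graphon_measure_def
  using prob_space_lam keisler_measure_pattern_measure[OF assms(1)]
    integrable_pattern_measure_edge_prob[OF assms(2,3)]
  by (rule keisler_measure_integral)

lemma M_invariant_graphon_measure:
  fixes R :: "'u \<Rightarrow> 'u \<Rightarrow> bool"
  assumes "rado_model R"
  shows "M_invariant R M (graphon_measure R M W F)"
  unfolding M_invariant_def graphon_measure_def
proof (intro allI impI)
  fix \<phi> :: "'u fm" and a b :: "'u list"
  assume "params \<phi> = {}" "fv \<phi> \<subseteq> {..length a}" and st: "same_type_over R M a b"
  then have "pattern_measure R (edge_prob R M W F p) (inst 0 a \<phi>) =
      pattern_measure R (edge_prob R M W F p) (inst 0 b \<phi>)" for p
    by (intro pattern_measure_inst_invariant[OF assms st] edge_prob_same_type[OF st])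
  then show "(LINT p|lam M. pattern_measure R (edge_prob R M W F p) (inst 0 a \<phi>)) =
      (LINT p|lam M. pattern_measure R (edge_prob R M W F p) (inst 0 b \<phi>))"
    by simp
qed

lemma prod_of_bool: "finite A \<Longrightarrow> (\<Prod>a\<in>A. of_bool (P a)) = (of_bool (\<forall>a\<in>A. P a) :: real)"
  by (induction A rule: finite_induct) auto

lemma graphon_measure_basic_fm:
  assumes "rado_model R" "borel_graphon W" "F \<in> lam M \<rightarrow>\<^sub>M unit_interval"
    and "is_basic M as bs cs ds E"
  shows "graphon_measure R M W F (basic_fm as bs cs ds E) = muW R M W F as bs cs ds E"
proof -
  have "norel E" and in_M: "set as \<subseteq> M" "set bs \<subseteq> M"
    and out_M: "set cs \<inter> M = {}" "set ds \<inter> M = {}"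
    and "set as \<inter> set bs = {}" "set cs \<inter> set ds = {}"
    using assms(4) unfolding is_basic_def by blast+
  then have disjoint: "(set as \<union> set cs) \<inter> (set bs \<union> set ds) = {}" "set as \<inter> set cs = {}"
      "set bs \<inter> set ds = {}"
    by blast+
  have "pattern_measure R (edge_prob R M W F p) (basic_fm as bs cs ds E) =
      (if trivial_E R E then 0 else
         indicator {q. (\<forall>a\<in>set as. q a) \<and> (\<forall>b\<in>set bs. \<not> q b)} p
         * (\<Prod>c\<in>set cs. W (F p) (F (tpM R M c)))
         * (\<Prod>d\<in>set ds. 1 - W (F p) (F (tpM R M d))))"
    if "p \<in> space (lam M)" for p
  proof -
    let ?e = "edge_prob R M W F p"
    have "(\<Prod>a\<in>set as \<union> set cs. ?e a) * (\<Prod>b\<in>set bs \<union> set ds. 1 - ?e b) =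
        ((\<Prod>a\<in>set as. ?e a) * (\<Prod>b\<in>set bs. 1 - ?e b))
          * (\<Prod>c\<in>set cs. ?e c) * (\<Prod>d\<in>set ds. 1 - ?e d)"
      using disjoint by (simp add: prod.union_disjoint)
    also have "(\<Prod>a\<in>set as. ?e a) * (\<Prod>b\<in>set bs. 1 - ?e b) =
        indicator {q. (\<forall>a\<in>set as. q a) \<and> (\<forall>b\<in>set bs. \<not> q b)} p"
      using in_M by (simp add: edge_prob_def subset_iff prod_of_bool indicator_def)
    finally show ?thesis
      using pattern_measure_basic_fm[OF assms(1) \<open>norel E\<close> disjoint(1)]
        edge_prob_bounds[OF assms(2,3) that] out_M
      by (auto simp: edge_prob_def disjoint_iff intro!: prod.cong)
  qed
  then show ?thesis
    unfolding graphon_measure_def muW_def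
    by (cases "trivial_E R E") (simp_all cong: Bochner_Integration.integral_cong)
qed

lemma graphon_measure_Eq_Par:
  "rado_model R \<Longrightarrow> graphon_measure R M W F (Eq (Var 0) (Par a)) = 0"
  by (simp add: graphon_measure_def pattern_measure_Eq_Par)

theorem proposition4p17:
  fixes R :: "'u \<Rightarrow> 'u \<Rightarrow> bool" and M :: "'u set"
    and W :: "real \<Rightarrow> real \<Rightarrow> real" and F :: "('u \<Rightarrow> bool) \<Rightarrow> real"
  assumes "rado_model R" and "aleph1_saturated R"
    and "countable M" and "elem_sub R M"
    and "borel_graphon W"
    and "measure_iso (lam M) F"
  shows "\<exists>\<mu>. keisler_measure R \<mu> \<and> M_invariant R M \<mu> \<and>
           (\<forall>as bs cs ds E. is_basic M as bs cs ds E \<longrightarrow>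
               \<mu> (basic_fm as bs cs ds E) = muW R M W F as bs cs ds E) \<and>
           (\<forall>a. \<mu> (Eq (Var 0) (Par a)) = 0)"
proof -
  have F: "F \<in> lam M \<rightarrow>\<^sub>M unit_interval"
    using \<open>measure_iso (lam M) F\<close> unfolding measure_iso_def by blast
  show ?thesis
    using keisler_measure_graphon_measure[OF \<open>rado_model R\<close> \<open>borel_graphon W\<close> F]
      M_invariant_graphon_measure[OF \<open>rado_model R\<close>]
      graphon_measure_basic_fm[OF \<open>rado_model R\<close> \<open>borel_graphon W\<close> F]
      graphon_measure_Eq_Par[OF \<open>rado_model R\<close>]
    by blast
qed

end
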